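(* Let $\Theta_{\mathrm{Sym}(V)}:\mathrm{Sym}(V)\to\mathrm{Sym}(V)$ be the linear map with $\Theta_{\mathrm{Sym}(V)}(\overline{v_\alpha})=2^{\ell(\alpha)}\overline{v_\alpha}$ if $v_\alpha$ is odd and $0$ otherwise. Then $\Theta_{\mathrm{Sym}(V)}$ is a graded Hopf algebra morphism with image in $\mathrm{Sym}(\mathrm{O}(V))$, and $\Phi_{\mathrm{Sym}(V)}\circ\Theta_{\mathrm{Sym}(V)}=\Theta_{\mathrm{Sym}}\circ\Phi_{\mathrm{Sym}(V)}$. Thus $\Theta_{\mathrm{Sym}(V)}$ is a theta map for $(\mathrm{Sym}(V),\zeta_{\mathrm{Sym}(V)})$.
   Context: $V$ is a graded vector space with fixed homogeneous basis $\{v_1,v_2,\dots\}$, positive degrees, finitely many of each degree. For a composition $\alpha=(\alpha_1,\dots,\alpha_\ell)$ ($\ell(\alpha)=\ell$), $v_\alpha=v_{\alpha_1}\cdots v_{\alpha_\ell}$ in the tensor algebra $\mathrm{T}(V)$ (concatenation product, $v_i$ primitive). $\mathrm{Sym}(V)=\mathrm{T}(V)/I(V)$ where $I(V)$ is the ideal generated by all $v_iv_j-v_jv_i$; $\overline{v_\alpha}$ is the class of $v_\alpha$, $\deg(\overline{v_\alpha})=\sum\deg(v_{\alpha_i})$. $v_\alpha$ is odd if every $\deg(v_{\alpha_i})$ is odd; $\mathrm{Sym}(\mathrm{O}(V))$ is the span of $\overline{v_\alpha}$ with $v_\alpha$ odd. $\mathrm{Sym}$ is the Hopf algebra of symmetric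 functions with scaled power sums $p_n=\frac1n\sum_i x_i^n$ (primitive, freely generating). $\Phi_{\mathrm{Sym}(V)}:\mathrm{Sym}(V)\to\mathrm{Sym}$ is the algebra morphism $\overline{v_i}\mapsto p_{\deg(v_i)}$; $\zeta_{\mathrm{Sym}(V)}$ is the character $\overline{v_i}\mapsto 1/\deg(v_i)$. $\zeta_{\mathrm{Sym}}(f)=f(1,0,0,\dots)$. $\Theta_{\mathrm{Sym}}$ is the unique graded Hopf morphism $\mathrm{Sym}\to\mathrm{Sym}$ with $\zeta_{\mathrm{Sym}}\circ\Theta_{\mathrm{Sym}}=\overline{\zeta_{\mathrm{Sym}}^{-1}}\zeta_{\mathrm{Sym}}$ (convolution $\zeta\zeta'=m\circ(\zeta\otimes\zeta')\circ\Delta$, $\zeta^{-1}=\zeta\circ\mathcal{S}$, $\bar\zeta=(-1)^n\zeta$ in degree $n$); equivalently the algebra morphism with $\Theta_{\mathrm{Sym}}(p_n)=2p_n$ for $n$ odd and $0$ for $n$ even. A theta map here means a graded Hopf morphism $\Theta$ of $\mathrm{Sym}(V)$ with $\Phi_{\mathrm{Sym}(V)}\circ\Theta=\Theta_{\mathrm{Sym}}\circ\Phi_{\mathrm{Sym}(V)}$. *)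

theory Defs
  imports Main "HOL-Library.Poly_Mapping" "HOL-Library.Product_Plus"
begin

text \<open>
  The fixed homogeneous basis of V is indexed by a type 'i, with a
  degree function deg :: 'i => nat (positive, finitely many basis vectors of
  each degree).  Sym(V) is the commutative polynomial algebra over a field 'k
  of characteristic 0 in the commuting variables v_i:
    an element is a finitely supported map  ('i =>0 nat) =>0 'k,
  a monomial  a :: 'i =>0 nat  standing for the class of v_alpha where alpha
  has exactly  lookup a i  entries equal to i.
  Sym is modelled likewise as the free commutative algebra on the scaled
  power sums p_1, p_2, ...; the variable m :: nat stands for p_(m+1).
  The tensor square of a polynomial algebra is modelled as polynomials in
  pairs of monomials:  (('i =>0 nat) * ('i =>0 nat)) =>0 'k.
\<close>

type_synonym ('i,'k) symV = "('i \<Rightarrow>\<^sub>0 nat) \<Rightarrow>\<^sub>0 'k"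
type_synonym ('i,'k) symV2 = "(('i \<Rightarrow>\<^sub>0 nat) \<times> ('i \<Rightarrow>\<^sub>0 nat)) \<Rightarrow>\<^sub>0 'k"
type_synonym 'k symf = "(nat \<Rightarrow>\<^sub>0 nat) \<Rightarrow>\<^sub>0 'k"

definition smul :: "'k::comm_ring_1 \<Rightarrow> ('m \<Rightarrow>\<^sub>0 'k) \<Rightarrow> ('m \<Rightarrow>\<^sub>0 'k)" where
  "smul c f = Poly_Mapping.map (\<lambda>x. c * x) f"

definition mon :: "'m \<Rightarrow> ('m \<Rightarrow>\<^sub>0 'k::comm_ring_1)" where
  "mon a = Poly_Mapping.single a 1"

definition var :: "'i \<Rightarrow> ('i,'k::comm_ring_1) symV" where
  "var i = mon (Poly_Mapping.single i 1)"

definition psum :: "nat \<Rightarrow> 'k::comm_ring_1 symf" where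
  "psum n = var (n - 1)"

definition subst :: "('i \<Rightarrow> ('m::comm_monoid_add \<Rightarrow>\<^sub>0 'k::comm_ring_1))
     \<Rightarrow> ('i,'k) symV \<Rightarrow> ('m \<Rightarrow>\<^sub>0 'k)" where
  "subst g f = (\<Sum>a\<in>Poly_Mapping.keys f.
       smul (Poly_Mapping.lookup f a) (\<Prod>i\<in>Poly_Mapping.keys a. g i ^ Poly_Mapping.lookup a i))"

definition mlen :: "('i \<Rightarrow>\<^sub>0 nat) \<Rightarrow> nat" where
  "mlen a = (\<Sum>i\<in>Poly_Mapping.keys a. Poly_Mapping.lookup a i)"

definition mdeg :: "('i \<Rightarrow> nat) \<Rightarrow> ('i \<Rightarrow>\<^sub>0 nat) \<Rightarrow> nat" where
  "mdeg deg a = (\<Sum>i\<in>Poly_Mapping.keys a. Poly_Mapping.lookup a i * deg i)"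

definition odd_mon :: "('i \<Rightarrow> nat) \<Rightarrow> ('i \<Rightarrow>\<^sub>0 nat) \<Rightarrow> bool" where
  "odd_mon deg a \<longleftrightarrow> (\<forall>i\<in>Poly_Mapping.keys a. odd (deg i))"

definition SymO :: "('i \<Rightarrow> nat) \<Rightarrow> ('i,'k::comm_ring_1) symV set" where
  "SymO deg = {f. \<forall>a\<in>Poly_Mapping.keys f. odd_mon deg a}"

definition homogeneous :: "('i \<Rightarrow> nat) \<Rightarrow> nat \<Rightarrow> ('i,'k::comm_ring_1) symV \<Rightarrow> bool" where
  "homogeneous deg n f \<longleftrightarrow> (\<forall>a\<in>Poly_Mapping.keys f. mdeg deg a = n)"

definition graded_map :: "('i \<Rightarrow> nat) \<Rightarrow> (('i,'k::comm_ring_1) symV \<Rightarrow> ('i,'k) symV) \<Rightarrow> bool" where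
  "graded_map deg F \<longleftrightarrow> (\<forall>n f. homogeneous deg n f \<longrightarrow> homogeneous deg n (F f))"

definition tensor :: "('i,'k::comm_ring_1) symV \<Rightarrow> ('i,'k) symV \<Rightarrow> ('i,'k) symV2" where
  "tensor f g = (\<Sum>a\<in>Poly_Mapping.keys f. \<Sum>b\<in>Poly_Mapping.keys g.
       smul (Poly_Mapping.lookup f a * Poly_Mapping.lookup g b) (mon (a, b)))"

definition tensor_map :: "(('i,'k::comm_ring_1) symV \<Rightarrow> ('i,'k) symV)
     \<Rightarrow> (('i,'k) symV \<Rightarrow> ('i,'k) symV) \<Rightarrow> ('i,'k) symV2 \<Rightarrow> ('i,'k) symV2" where
  "tensor_map F G h = (\<Sum>ab\<in>Poly_Mapping.keys h.
       smul (Poly_Mapping.lookup h ab) (tensor (F (mon (fst ab))) (G (mon (snd ab)))))"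

definition coprod :: "('i,'k::comm_ring_1) symV \<Rightarrow> ('i,'k) symV2" where
  "coprod = subst (\<lambda>i. tensor (var i) 1 + tensor 1 (var i))"

definition counit :: "('i,'k::comm_ring_1) symV \<Rightarrow> 'k" where
  "counit f = Poly_Mapping.lookup f 0"

definition antipode :: "('i,'k::comm_ring_1) symV \<Rightarrow> ('i,'k) symV" where
  "antipode = subst (\<lambda>i. - var i)"

definition hopf_morphism :: "(('i,'k::comm_ring_1) symV \<Rightarrow> ('i,'k) symV) \<Rightarrow> bool" where
  "hopf_morphism F \<longleftrightarrow>
     (\<forall>f g. F (f + g) = F f + F g) \<and>
     (\<forall>c f. F (smul c f) = smul c (F f)) \<and>
     F 1 = 1 \<and>
     (\<forall>f g. F (f * g) = F f * F g) \<and>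
     (\<forall>f. coprod (F f) = tensor_map F F (coprod f)) \<and>
     (\<forall>f. counit (F f) = counit f) \<and>
     (\<forall>f. antipode (F f) = F (antipode f))"

definition PhiSymV :: "('i \<Rightarrow> nat) \<Rightarrow> ('i,'k::comm_ring_1) symV \<Rightarrow> 'k symf" where
  "PhiSymV deg = subst (\<lambda>i. psum (deg i))"

definition ThetaSym :: "'k::comm_ring_1 symf \<Rightarrow> 'k symf" where
  "ThetaSym = subst (\<lambda>m. if odd (m + 1) then smul 2 (psum (m + 1)) else 0)"

definition theta_map :: "('i \<Rightarrow> nat) \<Rightarrow> (('i,'k::comm_ring_1) symV \<Rightarrow> ('i,'k) symV) \<Rightarrow> bool" where
  "theta_map deg F \<longleftrightarrow> hopf_morphism F \<and> graded_map deg F \<and>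
      PhiSymV deg \<circ> F = ThetaSym \<circ> PhiSymV deg"

definition ThetaSymV :: "('i \<Rightarrow> nat) \<Rightarrow> ('i,'k::comm_ring_1) symV \<Rightarrow> ('i,'k) symV" where
  "ThetaSymV deg f = (\<Sum>a\<in>Poly_Mapping.keys f.
       smul (Poly_Mapping.lookup f a)
         (if odd_mon deg a then smul (2 ^ mlen a) (mon a) else 0))"

end

theory Submission
  imports Defs
begin

text \<open>
  Write c n = 2 for odd n and c n = 0 for even n.  Theta_Sym(V) multiplies the
  coefficient of v_alpha by the product of the c (deg v_i) over the letters of alpha,
  and Theta_Sym multiplies the coefficient of a monomial in the p_n by the product of
  the c n.  Rescaling coefficients by a weight that is multiplicative on monomials is
  the algebra endomorphism v_i |-> w_i v_i of a polynomial algebra; for primitive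
  generators such a map commutes with the coproduct (w_i v_i (x) 1 + 1 (x) w_i v_i), the
  counit and the antipode, and it preserves degrees.  Since Phi_Sym(V) sends v_i to
  p_(deg v_i), whose weight c (deg v_i) is that of v_i, Phi intertwines the two maps.
\<close>

lemma lookup_smul [simp]: "Poly_Mapping.lookup (smul c f) x = c * Poly_Mapping.lookup f x"
  unfolding smul_def by (simp add: Poly_Mapping.map.rep_eq when_def)

lemma smul_eq_single_zero_mult: "smul c f = Poly_Mapping.single 0 c * f"
  unfolding smul_def by (rule mult_map_scale_conv_mult)

lemma smul_single: "smul c (Poly_Mapping.single a d) = Poly_Mapping.single a (c * d)"
  by (rule poly_mapping_eqI) (simp add: lookup_single when_def)

lemma smul_add: "smul c (f + g) = smul c f + smul c g"
  by (rule poly_mapping_eqI) (simp add: lookup_add algebra_simps)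

lemma smul_uminus: "smul c (- f) = - smul c f"
  by (rule poly_mapping_eqI) simp

lemma smul_zero_left: "smul 0 f = 0"
  by (rule poly_mapping_eqI) simp

lemma poly_mapping_sum_single_superset:
  assumes "finite S" "Poly_Mapping.keys f \<subseteq> S"
  shows "f = (\<Sum>a\<in>S. Poly_Mapping.single a (Poly_Mapping.lookup f a))"
  using assms by (auto intro!: poly_mapping_eqI
      simp: lookup_sum lookup_single when_def in_keys_iff sum.delta)

lemma poly_mapping_sum_single:
  "f = (\<Sum>a\<in>Poly_Mapping.keys f. Poly_Mapping.single a (Poly_Mapping.lookup f a))"
  by (rule poly_mapping_sum_single_superset) simp_all

lemma single_zero_mult:
  "Poly_Mapping.single (0::'m::monoid_add) ((c::'k::comm_ring_1) * d)
     = Poly_Mapping.single 0 c * Poly_Mapping.single 0 d"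
  by (simp add: mult_single)

lemma single_zero_power:
  "Poly_Mapping.single (0::'m::monoid_add) (c::'k::comm_ring_1) ^ n = Poly_Mapping.single 0 (c ^ n)"
  by (induction n) (simp_all add: mult_single)

lemma prod_single:
  "(\<Prod>x\<in>S. Poly_Mapping.single (a x :: 'm::comm_monoid_add) (c x :: 'k::comm_ring_1))
     = Poly_Mapping.single (sum a S) (prod c S)"
  by (induction S rule: infinite_finite_induct) (simp_all add: mult_single)

lemma var_power:
  "(var i :: ('i,'k::comm_ring_1) symV) ^ n = Poly_Mapping.single (Poly_Mapping.single i n) 1"
  by (induction n) (simp_all add: var_def mon_def mult_single single_add[symmetric] add.commute)

lemma tensor_single:
  "tensor (Poly_Mapping.single a (c::'k::comm_ring_1)) (Poly_Mapping.single b d)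
     = Poly_Mapping.single (a, b) (c * d)"
  by (cases "c = 0"; cases "d = 0") (simp_all add: tensor_def mon_def smul_single)

definition scale_coeffs :: "('m \<Rightarrow> 'k::comm_ring_1) \<Rightarrow> ('m \<Rightarrow>\<^sub>0 'k) \<Rightarrow> ('m \<Rightarrow>\<^sub>0 'k)" where
  "scale_coeffs w = Poly_Mapping.mapp (\<lambda>a c. c * w a)"

lemma lookup_scale_coeffs [simp]:
  "Poly_Mapping.lookup (scale_coeffs w f) a = Poly_Mapping.lookup f a * w a"
  by (simp add: scale_coeffs_def lookup_mapp when_def in_keys_iff)

lemma keys_scale_coeffs_subset: "Poly_Mapping.keys (scale_coeffs w f) \<subseteq> Poly_Mapping.keys f"
  by (auto simp: in_keys_iff)

lemma scale_coeffs_add: "scale_coeffs w (f + g) = scale_coeffs w f + scale_coeffs w g"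
  by (rule poly_mapping_eqI) (simp add: lookup_add algebra_simps)

lemma scale_coeffs_uminus: "scale_coeffs w (- f) = - scale_coeffs w f"
  by (rule poly_mapping_eqI) simp

lemma scale_coeffs_smul: "scale_coeffs w (smul c f) = smul c (scale_coeffs w f)"
  by (rule poly_mapping_eqI) (simp add: algebra_simps)

lemma scale_coeffs_sum: "scale_coeffs w (sum h S) = (\<Sum>x\<in>S. scale_coeffs w (h x))"
  by (rule poly_mapping_eqI) (simp add: lookup_sum sum_distrib_right)

lemma scale_coeffs_single:
  "scale_coeffs w (Poly_Mapping.single a c) = Poly_Mapping.single a (c * w a)"
  by (rule poly_mapping_eqI) (simp add: lookup_single when_def)

lemma scale_coeffs_one: "w 0 = 1 \<Longrightarrow> scale_coeffs w 1 = 1"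
  by (rule poly_mapping_eqI) (simp add: lookup_one when_def)

lemma scale_coeffs_mult:
  fixes w :: "'m::comm_monoid_add \<Rightarrow> 'k::comm_ring_1"
  assumes w_add: "\<And>a b. w (a + b) = w a * w b"
  shows "scale_coeffs w (f * g) = scale_coeffs w f * scale_coeffs w g"
proof -
  have expand_product: "h * k = (\<Sum>a\<in>Poly_Mapping.keys f. \<Sum>b\<in>Poly_Mapping.keys g.
      Poly_Mapping.single (a + b) (Poly_Mapping.lookup h a * Poly_Mapping.lookup k b))"
    if "Poly_Mapping.keys h \<subseteq> Poly_Mapping.keys f" "Poly_Mapping.keys k \<subseteq> Poly_Mapping.keys g"
    for h k :: "'m \<Rightarrow>\<^sub>0 'k"
  proof -
    have "h = (\<Sum>a\<in>Poly_Mapping.keys f. Poly_Mapping.single a (Poly_Mapping.lookup h a))"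
         "k = (\<Sum>b\<in>Poly_Mapping.keys g. Poly_Mapping.single b (Poly_Mapping.lookup k b))"
      using that by (auto intro!: poly_mapping_sum_single_superset)
    then have "h * k = (\<Sum>a\<in>Poly_Mapping.keys f. Poly_Mapping.single a (Poly_Mapping.lookup h a))
        * (\<Sum>b\<in>Poly_Mapping.keys g. Poly_Mapping.single b (Poly_Mapping.lookup k b))"
      by (rule arg_cong2[where f = times])
    then show ?thesis
      by (simp only: sum_product mult_single)
  qed
  have "scale_coeffs w (f * g) = (\<Sum>a\<in>Poly_Mapping.keys f. \<Sum>b\<in>Poly_Mapping.keys g.
      Poly_Mapping.single (a + b) (Poly_Mapping.lookup f a * Poly_Mapping.lookup g b * w (a + b)))"
    by (simp add: expand_product scale_coeffs_sum scale_coeffs_single)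
  also have "\<dots> = scale_coeffs w f * scale_coeffs w g"
    by (simp add: expand_product keys_scale_coeffs_subset w_add algebra_simps)
  finally show ?thesis .
qed

lemma scale_coeffs_prod:
  fixes w :: "'m::comm_monoid_add \<Rightarrow> 'k::comm_ring_1"
  assumes "\<And>a b. w (a + b) = w a * w b" and "w 0 = 1"
  shows "scale_coeffs w (prod h S) = (\<Prod>x\<in>S. scale_coeffs w (h x))"
  by (induction S rule: infinite_finite_induct)
     (simp_all add: assms scale_coeffs_one scale_coeffs_mult)

lemma scale_coeffs_power:
  fixes w :: "'m::comm_monoid_add \<Rightarrow> 'k::comm_ring_1"
  assumes "\<And>a b. w (a + b) = w a * w b" and "w 0 = 1"
  shows "scale_coeffs w (f ^ n) = scale_coeffs w f ^ n"
  by (induction n) (simp_all add: assms scale_coeffs_one scale_coeffs_mult)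

lemma scale_coeffs_subst:
  fixes w :: "'m::comm_monoid_add \<Rightarrow> 'k::comm_ring_1"
  assumes "\<And>a b. w (a + b) = w a * w b" and "w 0 = 1"
  shows "scale_coeffs w (subst g f) = subst (\<lambda>i. scale_coeffs w (g i)) f"
  unfolding subst_def
  by (simp add: assms scale_coeffs_sum scale_coeffs_smul scale_coeffs_prod scale_coeffs_power)

definition monomial_weight :: "('i \<Rightarrow> 'k::comm_ring_1) \<Rightarrow> ('i \<Rightarrow>\<^sub>0 nat) \<Rightarrow> 'k" where
  "monomial_weight c a = (\<Prod>i\<in>Poly_Mapping.keys a. c i ^ Poly_Mapping.lookup a i)"

lemma monomial_weight_zero [simp]: "monomial_weight c 0 = 1"
  by (simp add: monomial_weight_def)

lemma monomial_weight_single [simp]: "monomial_weight c (Poly_Mapping.single i n) = c i ^ n"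
  by (simp add: monomial_weight_def)

lemma monomial_weight_superset:
  assumes "finite S" "Poly_Mapping.keys a \<subseteq> S"
  shows "monomial_weight c a = (\<Prod>i\<in>S. c i ^ Poly_Mapping.lookup a i)"
  unfolding monomial_weight_def
  by (rule prod.mono_neutral_left[OF assms]) (auto simp: in_keys_iff)

lemma monomial_weight_add: "monomial_weight c (a + b) = monomial_weight c a * monomial_weight c b"
proof -
  let ?S = "Poly_Mapping.keys a \<union> Poly_Mapping.keys b"
  have "monomial_weight c (a + b) = (\<Prod>i\<in>?S. c i ^ Poly_Mapping.lookup (a + b) i)"
    by (rule monomial_weight_superset) (auto simp: in_keys_iff lookup_add)
  also have "\<dots> = (\<Prod>i\<in>?S. c i ^ Poly_Mapping.lookup a i) * (\<Prod>i\<in>?S. c i ^ Poly_Mapping.lookup b i)"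
    by (simp add: lookup_add power_add prod.distrib)
  also have "\<dots> = monomial_weight c a * monomial_weight c b"
    by (simp add: monomial_weight_superset[symmetric])
  finally show ?thesis .
qed

lemma scale_coeffs_monomial_weight_subst:
  "scale_coeffs (monomial_weight c) (subst g f) = subst (\<lambda>i. scale_coeffs (monomial_weight c) (g i)) f"
  by (rule scale_coeffs_subst) (simp_all add: monomial_weight_add)

lemma subst_scale_coeffs_monomial_weight:
  "subst g (scale_coeffs (monomial_weight c) f) = subst (\<lambda>i. smul (c i) (g i)) f"
proof -
  have "subst g (scale_coeffs (monomial_weight c) f) = (\<Sum>a\<in>Poly_Mapping.keys f.
      smul (Poly_Mapping.lookup f a * monomial_weight c a)
        (\<Prod>i\<in>Poly_Mapping.keys a. g i ^ Poly_Mapping.lookup a i))"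
    unfolding subst_def lookup_scale_coeffs
    by (rule sum.mono_neutral_left) (auto simp: in_keys_iff smul_eq_single_zero_mult)
  also have "\<dots> = subst (\<lambda>i. smul (c i) (g i)) f"
    unfolding subst_def monomial_weight_def
    by (simp add: smul_eq_single_zero_mult power_mult_distrib prod.distrib single_zero_power
        prod_single single_zero_mult mult_ac)
  finally show ?thesis .
qed

lemma subst_var: "subst var f = (f :: ('i,'k::comm_ring_1) symV)"
proof -
  have "(\<Prod>i\<in>Poly_Mapping.keys a. (var i :: ('i,'k) symV) ^ Poly_Mapping.lookup a i)
      = Poly_Mapping.single a 1" for a :: "'i \<Rightarrow>\<^sub>0 nat"
    by (simp add: var_power prod_single poly_mapping_sum_single[symmetric])
  then show ?thesis
    unfolding subst_def
    by (simp add: smul_single poly_mapping_sum_single[symmetric])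
qed

lemma tensor_map_scale_coeffs:
  "tensor_map (scale_coeffs w) (scale_coeffs w) (h :: ('i,'k::comm_ring_1) symV2)
     = scale_coeffs (\<lambda>(a, b). w a * w b) h"
proof -
  have "tensor_map (scale_coeffs w) (scale_coeffs w) h = (\<Sum>ab\<in>Poly_Mapping.keys h.
      scale_coeffs (\<lambda>(a, b). w a * w b) (Poly_Mapping.single ab (Poly_Mapping.lookup h ab)))"
    unfolding tensor_map_def
    by (intro sum.cong) (auto simp: mon_def scale_coeffs_single tensor_single smul_def)
  also have "\<dots> = scale_coeffs (\<lambda>(a, b). w a * w b) h"
    by (subst (2) poly_mapping_sum_single) (simp add: scale_coeffs_sum)
  finally show ?thesis .
qed

lemma coprod_scale_coeffs_monomial_weight:
  fixes c :: "'i \<Rightarrow> 'k::comm_ring_1" and f :: "('i,'k) symV"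
  defines "w \<equiv> monomial_weight c"
  shows "coprod (scale_coeffs w f) = tensor_map (scale_coeffs w) (scale_coeffs w) (coprod f)"
proof -
  define w2 :: "('i \<Rightarrow>\<^sub>0 nat) \<times> ('i \<Rightarrow>\<^sub>0 nat) \<Rightarrow> 'k" where "w2 = (\<lambda>(a, b). w a * w b)"
  have primitive: "tensor (var i) 1 + tensor 1 (var i) = (Poly_Mapping.single (Poly_Mapping.single i 1, 0) 1
      + Poly_Mapping.single (0, Poly_Mapping.single i 1) 1 :: ('i,'k) symV2)" for i
    using tensor_single[of "Poly_Mapping.single i 1" "1::'k" 0 1]
      tensor_single[of 0 "1::'k" "Poly_Mapping.single i 1" 1]
    by (simp add: var_def mon_def)
  have "coprod (scale_coeffs w f) = subst (\<lambda>i. smul (c i) (tensor (var i) 1 + tensor 1 (var i))) f"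
    unfolding coprod_def w_def by (rule subst_scale_coeffs_monomial_weight)
  also have "(\<lambda>i. smul (c i) (tensor (var i) 1 + tensor 1 (var i)))
      = (\<lambda>i. scale_coeffs w2 (tensor (var i) 1 + tensor 1 (var i)))"
    by (simp add: fun_eq_iff primitive smul_add smul_single scale_coeffs_add
        scale_coeffs_single w2_def w_def)
  also have "subst \<dots> f = scale_coeffs w2 (coprod f)"
    unfolding coprod_def
    by (rule scale_coeffs_subst[symmetric]) (auto simp: w2_def w_def monomial_weight_add zero_prod_def)
  finally show ?thesis
    by (simp add: tensor_map_scale_coeffs w2_def)
qed

lemma antipode_scale_coeffs_monomial_weight:
  fixes f :: "('i,'k::comm_ring_1) symV"
  shows "antipode (scale_coeffs (monomial_weight c) f) = scale_coeffs (monomial_weight c) (antipode f)"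
proof -
  have "antipode (scale_coeffs (monomial_weight c) f) = subst (\<lambda>i. smul (c i) (- var i)) f"
    unfolding antipode_def by (rule subst_scale_coeffs_monomial_weight)
  also have "(\<lambda>i. smul (c i) (- var i)) = (\<lambda>i. scale_coeffs (monomial_weight c) (- var i :: ('i,'k) symV))"
    by (simp add: fun_eq_iff var_def mon_def smul_uminus smul_single scale_coeffs_uminus
        scale_coeffs_single)
  finally show ?thesis
    unfolding antipode_def by (simp add: scale_coeffs_monomial_weight_subst)
qed

lemma hopf_morphism_scale_coeffs_monomial_weight:
  "hopf_morphism (scale_coeffs (monomial_weight c) :: ('i,'k::comm_ring_1) symV \<Rightarrow> ('i,'k) symV)"
  unfolding hopf_morphism_def
  by (simp add: scale_coeffs_add scale_coeffs_smul scale_coeffs_one scale_coeffs_mult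
      monomial_weight_add counit_def coprod_scale_coeffs_monomial_weight
      antipode_scale_coeffs_monomial_weight)

lemma graded_map_scale_coeffs: "graded_map deg (scale_coeffs w)"
  unfolding graded_map_def homogeneous_def by (meson keys_scale_coeffs_subset subsetD)

lemma scale_coeffs_in_SymO:
  assumes "\<And>a. w a \<noteq> 0 \<Longrightarrow> odd_mon deg a"
  shows "scale_coeffs w f \<in> SymO deg"
  using assms by (auto simp: SymO_def in_keys_iff) (metis mult_zero_right)

lemma PhiSymV_scale_coeffs_monomial_weight:
  fixes f :: "('i,'k::comm_ring_1) symV"
  assumes "\<And>i. c' (deg i - 1) = c i"
  shows "PhiSymV deg (scale_coeffs (monomial_weight c) f)
    = scale_coeffs (monomial_weight c') (PhiSymV deg f)"
proof -
  have "PhiSymV deg (scale_coeffs (monomial_weight c) f) = subst (\<lambda>i. smul (c i) (psum (deg i))) f"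
    unfolding PhiSymV_def by (rule subst_scale_coeffs_monomial_weight)
  also have "(\<lambda>i. smul (c i) (psum (deg i))) = (\<lambda>i. scale_coeffs (monomial_weight c') (psum (deg i)))"
    by (simp add: fun_eq_iff assms[symmetric] psum_def var_def mon_def smul_single
        scale_coeffs_single)
  finally show ?thesis
    unfolding PhiSymV_def by (simp add: scale_coeffs_monomial_weight_subst)
qed

definition theta_coeff :: "nat \<Rightarrow> 'k::comm_ring_1" where
  "theta_coeff n = (if odd n then 2 else 0)"

lemma monomial_weight_theta_coeff:
  "monomial_weight (\<lambda>i. theta_coeff (deg i) :: 'k::comm_ring_1) a
     = (if odd_mon deg a then 2 ^ mlen a else 0)"
proof (cases "odd_mon deg a")
  case True
  then have "monomial_weight (\<lambda>i. theta_coeff (deg i) :: 'k) a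
      = (\<Prod>i\<in>Poly_Mapping.keys a. 2 ^ Poly_Mapping.lookup a i)"
    unfolding monomial_weight_def odd_mon_def theta_coeff_def by (intro prod.cong) auto
  with True show ?thesis by (simp add: mlen_def power_sum)
next
  case False
  then obtain i where i: "i \<in> Poly_Mapping.keys a" "even (deg i)"
    unfolding odd_mon_def by auto
  then have "(theta_coeff (deg i) :: 'k) ^ Poly_Mapping.lookup a i = 0"
    by (simp add: theta_coeff_def in_keys_iff zero_power)
  with i False show ?thesis
    unfolding monomial_weight_def by (auto intro!: prod_zero)
qed

lemma ThetaSymV_eq_scale_coeffs:
  fixes deg :: "'i \<Rightarrow> nat"
  shows "ThetaSymV deg = scale_coeffs (monomial_weight (\<lambda>i. theta_coeff (deg i) :: 'k::comm_ring_1))"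
proof
  fix f :: "('i,'k) symV"
  have "ThetaSymV deg f = (\<Sum>a\<in>Poly_Mapping.keys f. scale_coeffs
      (monomial_weight (\<lambda>i. theta_coeff (deg i))) (Poly_Mapping.single a (Poly_Mapping.lookup f a)))"
    unfolding ThetaSymV_def
  proof (rule sum.cong)
    fix a
    have "(if odd_mon deg a then smul (2 ^ mlen a) (mon a) else 0)
        = (Poly_Mapping.single a (monomial_weight (\<lambda>i. theta_coeff (deg i)) a) :: ('i,'k) symV)"
      by (simp add: monomial_weight_theta_coeff mon_def smul_single)
    then show "smul (Poly_Mapping.lookup f a) (if odd_mon deg a then smul (2 ^ mlen a) (mon a) else 0)
        = scale_coeffs (monomial_weight (\<lambda>i. theta_coeff (deg i)))
            (Poly_Mapping.single a (Poly_Mapping.lookup f a))"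
      by (simp add: smul_single scale_coeffs_single)
  qed simp
  also have "\<dots> = scale_coeffs (monomial_weight (\<lambda>i. theta_coeff (deg i))) f"
    by (subst (2) poly_mapping_sum_single) (simp add: scale_coeffs_sum)
  finally show "ThetaSymV deg f = scale_coeffs (monomial_weight (\<lambda>i. theta_coeff (deg i))) f" .
qed

lemma ThetaSym_eq_scale_coeffs:
  "ThetaSym = scale_coeffs (monomial_weight (\<lambda>m. theta_coeff (m + 1) :: 'k::comm_ring_1))"
proof
  fix h :: "'k symf"
  have "(\<lambda>m. if odd (m + 1) then smul 2 (psum (m + 1)) else 0)
      = (\<lambda>m. smul (theta_coeff (m + 1)) (var m) :: 'k symf)"
    by (simp add: fun_eq_iff theta_coeff_def psum_def smul_zero_left)
  then have "ThetaSym h = subst (\<lambda>m. smul (theta_coeff (m + 1)) (var m)) h"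
    unfolding ThetaSym_def by simp
  also have "\<dots> = scale_coeffs (monomial_weight (\<lambda>m. theta_coeff (m + 1))) h"
    by (simp add: subst_scale_coeffs_monomial_weight[symmetric] subst_var)
  finally show "ThetaSym h = scale_coeffs (monomial_weight (\<lambda>m. theta_coeff (m + 1))) h" .
qed

theorem mainTheorem13:
  fixes deg :: "'i \<Rightarrow> nat"
  assumes deg_pos: "\<And>i. deg i > 0"
    and deg_fin: "\<And>n. finite {i. deg i = n}"
  shows "hopf_morphism (ThetaSymV deg :: ('i,'k::field_char_0) symV \<Rightarrow> ('i,'k) symV)
    \<and> graded_map deg (ThetaSymV deg :: ('i,'k) symV \<Rightarrow> ('i,'k) symV)
    \<and> (\<forall>f :: ('i,'k) symV. ThetaSymV deg f \<in> SymO deg)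
    \<and> PhiSymV deg \<circ> (ThetaSymV deg :: ('i,'k) symV \<Rightarrow> ('i,'k) symV) = ThetaSym \<circ> PhiSymV deg
    \<and> theta_map deg (ThetaSymV deg :: ('i,'k) symV \<Rightarrow> ('i,'k) symV)"
proof -
  have hopf: "hopf_morphism (ThetaSymV deg :: ('i,'k) symV \<Rightarrow> ('i,'k) symV)"
    by (simp add: ThetaSymV_eq_scale_coeffs hopf_morphism_scale_coeffs_monomial_weight)
  have graded: "graded_map deg (ThetaSymV deg :: ('i,'k) symV \<Rightarrow> ('i,'k) symV)"
    by (simp add: ThetaSymV_eq_scale_coeffs graded_map_scale_coeffs)
  have odd: "ThetaSymV deg f \<in> SymO deg" for f :: "('i,'k) symV"
    unfolding ThetaSymV_eq_scale_coeffs
    by (rule scale_coeffs_in_SymO) (simp add: monomial_weight_theta_coeff split: if_splits)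
  have "PhiSymV deg (scale_coeffs (monomial_weight (\<lambda>i. theta_coeff (deg i))) f)
      = scale_coeffs (monomial_weight (\<lambda>m. theta_coeff (m + 1))) (PhiSymV deg f)"
    for f :: "('i,'k) symV"
    by (rule PhiSymV_scale_coeffs_monomial_weight) (simp add: deg_pos Suc_leI)
  then have intertwines: "PhiSymV deg \<circ> (ThetaSymV deg :: ('i,'k) symV \<Rightarrow> ('i,'k) symV)
      = ThetaSym \<circ> PhiSymV deg"
    by (simp add: fun_eq_iff ThetaSymV_eq_scale_coeffs ThetaSym_eq_scale_coeffs)
  show ?thesis
    using hopf graded odd intertwines by (simp add: theta_map_def)
qed

end
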